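(* If $\bar f_1,\dots,\bar f_k\in\mathbb{K}[S_M]$ is a regular sequence in $\mathbb{K}[S_M]$, then for each $i\le k$, the homogenization $\chi^{-1}(\bar f_i)$ is not a zero-divisor in $\mathbb{K}[S_M^h]/\chi^{-1}(\langle\bar f_1,\dots,\bar f_{i-1}\rangle)$, where $\chi^{-1}(J)$ denotes the ideal of $\mathbb{K}[S_M^h]$ generated by the homogenizations of all elements of the ideal $J$.
   Context: Let $\mathbb{K}$ be a field of characteristic $0$, $M\subset\mathbb{R}^n$ a polytope with $0\in M$, $S_M\subset\mathbb{Z}^n$ the affine semigroup generated by $M\cap\mathbb{Z}^n$ and $S_M^h\subset\mathbb{Z}^{n+1}$ the one generated by $\{(s,1):s\in M\cap\mathbb{Z}^n\}$, both assumed pointed. $\mathbb{K}[S]$ is the semigroup algebra with monomials $X^s$, $X^sX^t=X^{s+t}$. The affine degree $\delta^A(X^s)$ of a monomial of $\mathbb{K}[S_M]$ is the least $d\in\mathbb{N}$ with $(s,d)\in S_M^h$, and for $f=\sum c_sX^s\ne0$, $\delta^A(f)=\max\{\delta^A(X^s):c_s\ne0\}$. The homogenization of $f$ is $\chi^{-1}(f)=\sum c_sX^{(s,\delta^A(f))}\in\mathbb{K}[S_M^h]$. *)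

theory Defs
  imports "HOL-Analysis.Analysis"
begin

definition lattice_points :: "(real ^ 'n) set \<Rightarrow> (int ^ 'n) set" where
  "lattice_points M = {s. (\<chi> i. real_of_int (s $ i)) \<in> M}"

inductive_set gen_monoid :: "'a::comm_monoid_add set \<Rightarrow> 'a set" for G where
  zero: "0 \<in> gen_monoid G"
| gen: "g \<in> G \<Longrightarrow> g \<in> gen_monoid G"
| add: "x \<in> gen_monoid G \<Longrightarrow> y \<in> gen_monoid G \<Longrightarrow> x + y \<in> gen_monoid G"

definition S_M :: "(real ^ 'n) set \<Rightarrow> (int ^ 'n) set" where
  "S_M M = gen_monoid (lattice_points M)"

definition S_M_h :: "(real ^ 'n) set \<Rightarrow> ((int ^ 'n) \<times> int) set" where
  "S_M_h M = gen_monoid ((\<lambda>s. (s, 1)) ` lattice_points M)"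

definition pointed :: "'a::ab_group_add set \<Rightarrow> bool" where
  "pointed S \<longleftrightarrow> S \<inter> uminus ` S \<subseteq> {0}"

text \<open>Semigroup algebra K[S]: finitely supported K-valued functions on S
  (f s is the coefficient of the monomial X^s).\<close>
definition sg_supp :: "('a \<Rightarrow> 'k::zero) \<Rightarrow> 'a set" where
  "sg_supp f = {s. f s \<noteq> 0}"

definition salg :: "'a set \<Rightarrow> ('a \<Rightarrow> 'k::zero) set" where
  "salg S = {f. finite (sg_supp f) \<and> sg_supp f \<subseteq> S}"

text \<open>Multiplication: X^s X^t = X^(s+t), extended bilinearly.\<close>
definition smult_alg :: "('a::plus \<Rightarrow> 'k::comm_ring_1) \<Rightarrow> ('a \<Rightarrow> 'k) \<Rightarrow> 'a \<Rightarrow> 'k" where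
  "smult_alg f g = (\<lambda>x. \<Sum>p\<in>{p \<in> sg_supp f \<times> sg_supp g. fst p + snd p = x}. f (fst p) * g (snd p))"

definition sg_ideal_gen :: "'a::plus set \<Rightarrow> ('a \<Rightarrow> 'k::comm_ring_1) set \<Rightarrow> ('a \<Rightarrow> 'k) set" where
  "sg_ideal_gen S G = {(\<lambda>x. \<Sum>i<(m::nat). smult_alg (h i) (g i) x) | m h g.
      \<forall>i<m. h i \<in> salg S \<and> g i \<in> G}"

definition nonzerodiv_mod :: "'a::plus set \<Rightarrow> ('a \<Rightarrow> 'k::comm_ring_1) set \<Rightarrow> ('a \<Rightarrow> 'k) \<Rightarrow> bool" where
  "nonzerodiv_mod S I f \<longleftrightarrow> (\<forall>g \<in> salg S. smult_alg f g \<in> I \<longrightarrow> g \<in> I)"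

definition regular_seq :: "'a::plus set \<Rightarrow> ('a \<Rightarrow> 'k::comm_ring_1) list \<Rightarrow> bool" where
  "regular_seq S fs \<longleftrightarrow> set fs \<subseteq> salg S \<and>
     (\<forall>i < length fs. nonzerodiv_mod S (sg_ideal_gen S (set (take i fs))) (fs ! i)) \<and>
     sg_ideal_gen S (set fs) \<noteq> salg S"

definition adeg_mon :: "(real ^ 'n) set \<Rightarrow> int ^ 'n \<Rightarrow> nat" where
  "adeg_mon M s = (LEAST d::nat. (s, int d) \<in> S_M_h M)"

definition adeg :: "(real ^ 'n) set \<Rightarrow> (int ^ 'n \<Rightarrow> 'k::zero) \<Rightarrow> nat" where
  "adeg M f = Max (adeg_mon M ` sg_supp f)"

text \<open>Homogenization chi^-1(f) = sum c_s X^(s, deg f).\<close>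
definition homog :: "(real ^ 'n) set \<Rightarrow> (int ^ 'n \<Rightarrow> 'k::zero) \<Rightarrow> ((int ^ 'n) \<times> int \<Rightarrow> 'k)" where
  "homog M f = (\<lambda>(s, d). if d = int (adeg M f) then f s else 0)"

definition homog_ideal :: "(real ^ 'n) set \<Rightarrow> (int ^ 'n \<Rightarrow> 'k::comm_ring_1) set \<Rightarrow> ((int ^ 'n) \<times> int \<Rightarrow> 'k) set" where
  "homog_ideal M J = sg_ideal_gen (S_M_h M) (homog M ` J)"

end

theory Submission
  imports Defs "HOL-Library.Poly_Mapping"
begin

(* Let J be the ideal generated by f_1, ..., f_(i-1), I the ideal of K[S_M^h] generated by the
   homogenizations of the elements of J, and F the homogenization of f = f_i. Since I is generated
   by homogeneous elements it is graded: if F g \<in> I, then F g_d \<in> I for every homogeneous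
   component g_d of g. Dehomogenization \<chi> (setting the height variable to 1) is a ring
   homomorphism mapping I into J and F to f, so f \<chi>(g_d) \<in> J, whence \<chi>(g_d) \<in> J because f is a
   nonzerodivisor modulo J. Finally g_d is the homogenization of \<chi>(g_d) times the monomial
   X^(0,k) with k = d - deg \<chi>(g_d) \<ge> 0, which lies in K[S_M^h] because 0 \<in> M; so g_d \<in> I, and
   g \<in> I. *)

section \<open>Multiplication in semigroup algebras\<close>

lemma salg_UNIV_iff: "f \<in> salg UNIV \<longleftrightarrow> finite (sg_supp f)"
  by (simp add: salg_def)

lemma salg_subset_salg_UNIV: "salg S \<subseteq> salg UNIV"
  by (auto simp: salg_def)

lemma smult_alg_eq_sum_superset:
  assumes "finite A" "finite B" "sg_supp f \<subseteq> A" "sg_supp g \<subseteq> B"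
  shows "smult_alg f g x = (\<Sum>p\<in>{p\<in>A \<times> B. fst p + snd p = x}. f (fst p) * g (snd p))"
  unfolding smult_alg_def
  by (rule sum.mono_neutral_left) (use assms in \<open>auto simp: sg_supp_def\<close>)

lemma smult_alg_eq_lookup_times:
  fixes f g :: "'a::monoid_add \<Rightarrow> 'k::comm_ring_1"
  assumes "finite (sg_supp f)" "finite (sg_supp g)"
  shows "smult_alg f g = poly_mapping.lookup (Abs_poly_mapping f * Abs_poly_mapping g)"
proof
  fix x
  have fin: "finite {a. f a \<noteq> 0}" "finite {a. g a \<noteq> 0}"
    using assms by (simp_all add: sg_supp_def)
  have "poly_mapping.lookup (Abs_poly_mapping f * Abs_poly_mapping g) x = prod_fun f g x"
    using fin by (simp add: lookup_mult prod_fun_def)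
  also have "\<dots> = (\<Sum>(a, b). f a * g b when x = a + b)"
    using fin by (rule prod_fun_unfold_prod)
  also have "\<dots> = (\<Sum>p\<in>sg_supp f \<times> sg_supp g. case p of (a, b) \<Rightarrow> f a * g b when x = a + b)"
    by (rule Sum_any.expand_superset) (use assms in \<open>auto simp: sg_supp_def\<close>)
  also have "\<dots> = smult_alg f g x"
    using assms by (simp add: smult_alg_def sum.inter_filter when_def case_prod_beta eq_commute)
  finally show "smult_alg f g x = poly_mapping.lookup (Abs_poly_mapping f * Abs_poly_mapping g) x" ..
qed

lemma finite_sg_supp_lookup [simp]: "finite (sg_supp (poly_mapping.lookup p))"
  by (simp add: sg_supp_def)

lemma smult_alg_in_salg_UNIV:
  fixes f g :: "'a::monoid_add \<Rightarrow> 'k::comm_ring_1"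
  shows "f \<in> salg UNIV \<Longrightarrow> g \<in> salg UNIV \<Longrightarrow> smult_alg f g \<in> salg UNIV"
  by (simp add: salg_UNIV_iff smult_alg_eq_lookup_times)

lemma smult_alg_assoc:
  fixes f g h :: "'a::monoid_add \<Rightarrow> 'k::comm_ring_1"
  assumes "f \<in> salg UNIV" "g \<in> salg UNIV" "h \<in> salg UNIV"
  shows "smult_alg (smult_alg f g) h = smult_alg f (smult_alg g h)"
  using assms by (simp add: salg_UNIV_iff smult_alg_eq_lookup_times mult.assoc)

lemma smult_alg_commute:
  fixes f g :: "'a::comm_monoid_add \<Rightarrow> 'k::comm_ring_1"
  assumes "f \<in> salg UNIV" "g \<in> salg UNIV"
  shows "smult_alg f g = smult_alg g f"
  using assms by (simp add: salg_UNIV_iff smult_alg_eq_lookup_times mult.commute)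

lemma sum_eq_lookup_sum:
  assumes "\<forall>i\<in>A. u i \<in> salg UNIV"
  shows "(\<lambda>x. \<Sum>i\<in>A. u i x) = poly_mapping.lookup (\<Sum>i\<in>A. Abs_poly_mapping (u i))"
  using assms by (auto simp: salg_UNIV_iff lookup_sum fun_eq_iff sg_supp_def)

lemma sum_in_salg_UNIV: "\<forall>i\<in>A. u i \<in> salg UNIV \<Longrightarrow> (\<lambda>x. \<Sum>i\<in>A. u i x) \<in> salg UNIV"
  by (simp add: salg_UNIV_iff sum_eq_lookup_sum)

lemma smult_alg_sum_right:
  fixes r :: "'a::monoid_add \<Rightarrow> 'k::comm_ring_1"
  assumes "r \<in> salg UNIV" "\<forall>i\<in>A. u i \<in> salg UNIV"
  shows "smult_alg r (\<lambda>x. \<Sum>i\<in>A. u i x) = (\<lambda>x. \<Sum>i\<in>A. smult_alg r (u i) x)"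
proof -
  have "smult_alg r (\<lambda>x. \<Sum>i\<in>A. u i x)
      = poly_mapping.lookup (Abs_poly_mapping r * (\<Sum>i\<in>A. Abs_poly_mapping (u i)))"
    using assms by (simp add: salg_UNIV_iff sum_eq_lookup_sum smult_alg_eq_lookup_times)
  also have "\<dots> = poly_mapping.lookup (\<Sum>i\<in>A. Abs_poly_mapping r * Abs_poly_mapping (u i))"
    by (simp add: sum_distrib_left)
  also have "\<dots> = (\<lambda>x. \<Sum>i\<in>A. smult_alg r (u i) x)"
    using assms by (simp add: salg_UNIV_iff lookup_sum smult_alg_eq_lookup_times fun_eq_iff)
  finally show ?thesis .
qed

lemma sg_supp_smult_alg: "sg_supp (smult_alg f g) \<subseteq> {a + b |a b. a \<in> sg_supp f \<and> b \<in> sg_supp g}"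
proof
  fix x assume "x \<in> sg_supp (smult_alg f g)"
  then have "smult_alg f g x \<noteq> 0" by (simp add: sg_supp_def)
  then have "{p \<in> sg_supp f \<times> sg_supp g. fst p + snd p = x} \<noteq> {}"
    unfolding smult_alg_def by (metis sum.empty)
  then show "x \<in> {a + b |a b. a \<in> sg_supp f \<and> b \<in> sg_supp g}" by force
qed

lemma smult_alg_in_salg:
  fixes f g :: "'a::monoid_add \<Rightarrow> 'k::comm_ring_1"
  assumes "\<And>a b. a \<in> S \<Longrightarrow> b \<in> S \<Longrightarrow> a + b \<in> S"
    and "f \<in> salg S" "g \<in> salg S"
  shows "smult_alg f g \<in> salg S"
proof -
  have "smult_alg f g \<in> salg UNIV"
    using assms salg_subset_salg_UNIV by (blast intro: smult_alg_in_salg_UNIV)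
  moreover have "sg_supp (smult_alg f g) \<subseteq> S"
    using sg_supp_smult_alg[of f g] assms by (fastforce simp: salg_def)
  ultimately show ?thesis by (simp add: salg_def)
qed

lemma smult_alg_single_left:
  fixes g :: "'a::ab_group_add \<Rightarrow> 'k::comm_ring_1"
  assumes "g \<in> salg UNIV"
  shows "smult_alg (\<lambda>x. if x = a then 1 else 0) g = (\<lambda>x. g (x - a))"
proof
  fix x
  have "smult_alg (\<lambda>x. if x = a then 1 else 0) g x =
      (\<Sum>p\<in>{p\<in>{a} \<times> insert (x - a) (sg_supp g). fst p + snd p = x}.
         (if fst p = a then 1 else 0) * g (snd p))"
    by (rule smult_alg_eq_sum_superset) (use assms in \<open>auto simp: salg_UNIV_iff sg_supp_def\<close>)
  also have "{p\<in>{a} \<times> insert (x - a) (sg_supp g). fst p + snd p = x} = {(a, x - a)}"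
    by (auto simp: algebra_simps)
  finally show "smult_alg (\<lambda>x. if x = a then 1 else 0) g x = g (x - a)" by simp
qed

section \<open>Generated ideals\<close>

lemma smult_alg_sum_mem_sg_ideal_gen:
  assumes "finite A" "\<forall>i\<in>A. h i \<in> salg S \<and> g i \<in> G"
  shows "(\<lambda>x. \<Sum>i\<in>A. smult_alg (h i) (g i) x) \<in> sg_ideal_gen S G"
proof -
  obtain b where b: "bij_betw b {..<card A} A"
    using ex_bij_betw_nat_finite[OF assms(1)] by (auto simp: atLeast0LessThan)
  have "(\<lambda>x. \<Sum>i\<in>A. smult_alg (h i) (g i) x) = (\<lambda>x. \<Sum>j<card A. smult_alg (h (b j)) (g (b j)) x)"
    by (simp add: sum.reindex_bij_betw[OF b, symmetric])
  moreover have "\<forall>j<card A. (h \<circ> b) j \<in> salg S \<and> (g \<circ> b) j \<in> G"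
    using b assms(2) by (auto simp: bij_betw_def)
  ultimately show ?thesis
    unfolding sg_ideal_gen_def by (intro CollectI exI[of _ "card A"] exI[of _ "h \<circ> b"] exI[of _ "g \<circ> b"]) simp
qed

lemma zero_mem_sg_ideal_gen: "(\<lambda>x. 0) \<in> sg_ideal_gen S G"
  using smult_alg_sum_mem_sg_ideal_gen[of "{}" _ S _ G] by simp

lemma smult_alg_mem_sg_ideal_gen: "h \<in> salg S \<Longrightarrow> g \<in> G \<Longrightarrow> smult_alg h g \<in> sg_ideal_gen S G"
  using smult_alg_sum_mem_sg_ideal_gen[of "{()}" "\<lambda>_. h" S "\<lambda>_. g" G] by simp

lemma add_mem_sg_ideal_gen:
  assumes "a \<in> sg_ideal_gen S G" "b \<in> sg_ideal_gen S G"
  shows "(\<lambda>x. a x + b x) \<in> sg_ideal_gen S G"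
proof -
  obtain m h g where a: "a = (\<lambda>x. \<Sum>i<(m::nat). smult_alg (h i) (g i) x)"
    and hg: "\<forall>i<m. h i \<in> salg S \<and> g i \<in> G"
    using assms(1) unfolding sg_ideal_gen_def by blast
  obtain m' h' g' where b: "b = (\<lambda>x. \<Sum>i<(m'::nat). smult_alg (h' i) (g' i) x)"
    and hg': "\<forall>i<m'. h' i \<in> salg S \<and> g' i \<in> G"
    using assms(2) unfolding sg_ideal_gen_def by blast
  have "(\<lambda>x. a x + b x)
      = (\<lambda>x. \<Sum>i\<in>{..<m} <+> {..<m'}. smult_alg (case_sum h h' i) (case_sum g g' i) x)"
    unfolding a b by (simp add: sum.Plus comp_def)
  also have "\<dots> \<in> sg_ideal_gen S G"
    by (rule smult_alg_sum_mem_sg_ideal_gen) (use hg hg' in auto)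
  finally show ?thesis .
qed

lemma sum_mem_sg_ideal_gen:
  "finite A \<Longrightarrow> \<forall>i\<in>A. a i \<in> sg_ideal_gen S G \<Longrightarrow> (\<lambda>x. \<Sum>i\<in>A. a i x) \<in> sg_ideal_gen S G"
  by (induction A rule: finite_induct) (auto intro: add_mem_sg_ideal_gen zero_mem_sg_ideal_gen)

lemma sg_ideal_gen_subset_salg_UNIV:
  fixes G :: "('a::monoid_add \<Rightarrow> 'k::comm_ring_1) set"
  assumes "G \<subseteq> salg UNIV"
  shows "sg_ideal_gen S G \<subseteq> salg UNIV"
proof
  fix a assume "a \<in> sg_ideal_gen S G"
  then obtain m h g where a: "a = (\<lambda>x. \<Sum>i<(m::nat). smult_alg (h i) (g i) x)"
    and hg: "\<forall>i<m. h i \<in> salg S \<and> g i \<in> G"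
    unfolding sg_ideal_gen_def by blast
  have "\<forall>i<m. smult_alg (h i) (g i) \<in> salg UNIV"
    using hg assms salg_subset_salg_UNIV by (blast intro: smult_alg_in_salg_UNIV)
  then show "a \<in> salg UNIV" unfolding a by (intro sum_in_salg_UNIV) simp
qed

lemma smult_alg_left_mem_sg_ideal_gen:
  fixes r :: "'a::comm_monoid_add \<Rightarrow> 'k::comm_ring_1"
  assumes add_closed: "\<And>a b. a \<in> S \<Longrightarrow> b \<in> S \<Longrightarrow> a + b \<in> S"
    and "G \<subseteq> salg UNIV" "r \<in> salg S" "a \<in> sg_ideal_gen S G"
  shows "smult_alg r a \<in> sg_ideal_gen S G"
proof -
  obtain m h g where a: "a = (\<lambda>x. \<Sum>i<(m::nat). smult_alg (h i) (g i) x)"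
    and hg: "\<forall>i<m. h i \<in> salg S \<and> g i \<in> G"
    using assms(4) unfolding sg_ideal_gen_def by blast
  have fin: "r \<in> salg UNIV" "\<forall>i<m. h i \<in> salg UNIV \<and> g i \<in> salg UNIV"
    using assms(2,3) hg salg_subset_salg_UNIV by blast+
  have "smult_alg r a = (\<lambda>x. \<Sum>i<m. smult_alg r (smult_alg (h i) (g i)) x)"
    unfolding a using fin by (intro smult_alg_sum_right) (auto intro: smult_alg_in_salg_UNIV)
  also have "\<dots> = (\<lambda>x. \<Sum>i<m. smult_alg (smult_alg r (h i)) (g i) x)"
    using fin by (simp add: smult_alg_assoc)
  also have "\<dots> \<in> sg_ideal_gen S G"
    using hg assms(3) by (intro smult_alg_sum_mem_sg_ideal_gen) (auto intro: smult_alg_in_salg add_closed)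
  finally show ?thesis .
qed

lemma sg_ideal_gen_idem:
  fixes G :: "('a::comm_monoid_add \<Rightarrow> 'k::comm_ring_1) set"
  assumes "\<And>a b. a \<in> S \<Longrightarrow> b \<in> S \<Longrightarrow> a + b \<in> S" and "G \<subseteq> salg UNIV"
  shows "sg_ideal_gen S (sg_ideal_gen S G) \<subseteq> sg_ideal_gen S G"
proof
  fix a assume "a \<in> sg_ideal_gen S (sg_ideal_gen S G)"
  then obtain m h g where a: "a = (\<lambda>x. \<Sum>i<(m::nat). smult_alg (h i) (g i) x)"
    and hg: "\<forall>i<m. h i \<in> salg S \<and> g i \<in> sg_ideal_gen S G"
    unfolding sg_ideal_gen_def by blast
  show "a \<in> sg_ideal_gen S G"
    unfolding a using hg assms
    by (intro sum_mem_sg_ideal_gen) (auto intro: smult_alg_left_mem_sg_ideal_gen)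
qed

section \<open>Graded components and dehomogenization\<close>

definition deg_part :: "int \<Rightarrow> ('a \<times> int \<Rightarrow> 'k::zero) \<Rightarrow> 'a \<times> int \<Rightarrow> 'k" where
  "deg_part d g = (\<lambda>x. if snd x = d then g x else 0)"

(* The paper's \<chi>, substituting 1 for the height variable; meaningful for finitely supported g. *)
definition dehomog :: "('a \<times> int \<Rightarrow> 'k::comm_monoid_add) \<Rightarrow> 'a \<Rightarrow> 'k" where
  "dehomog g s = (\<Sum>p\<in>{p \<in> sg_supp g. fst p = s}. g p)"

lemma sg_supp_deg_part_subset: "sg_supp (deg_part d g) \<subseteq> sg_supp g"
  by (auto simp: sg_supp_def deg_part_def)

lemma sg_supp_deg_part_homogeneous: "sg_supp (deg_part d g) \<subseteq> {p. snd p = d}"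
  by (auto simp: sg_supp_def deg_part_def)

lemma deg_part_in_salg: "g \<in> salg S \<Longrightarrow> deg_part d g \<in> salg S"
  using sg_supp_deg_part_subset[of d g] by (auto simp: salg_def intro: finite_subset)

lemma deg_part_sum: "deg_part d (\<lambda>x. \<Sum>i\<in>A. u i x) = (\<lambda>x. \<Sum>i\<in>A. deg_part d (u i) x)"
  by (simp add: deg_part_def fun_eq_iff)

lemma sum_deg_part:
  assumes "g \<in> salg UNIV"
  shows "(\<lambda>x. \<Sum>d\<in>snd ` sg_supp g. deg_part d g x) = g"
proof
  fix x
  have "(\<Sum>d\<in>snd ` sg_supp g. deg_part d g x) = (\<Sum>d\<in>snd ` sg_supp g. if d = snd x then g x else 0)"
    by (rule sum.cong) (auto simp: deg_part_def)
  also have "\<dots> = (if snd x \<in> snd ` sg_supp g then g x else 0)"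
    using assms by (simp add: salg_UNIV_iff sum.delta)
  also have "\<dots> = g x"
    by (auto simp: sg_supp_def)
  finally show "(\<Sum>d\<in>snd ` sg_supp g. deg_part d g x) = g x" .
qed

lemma deg_part_smult_alg:
  fixes g q :: "'a::plus \<times> int \<Rightarrow> 'k::comm_ring_1"
  assumes "g \<in> salg UNIV" "q \<in> salg UNIV" and q_hom: "sg_supp q \<subseteq> {p. snd p = c}"
  shows "deg_part e (smult_alg g q) = smult_alg (deg_part (e - c) g) q"
proof
  fix x
  let ?P = "{p \<in> sg_supp g \<times> sg_supp q. fst p + snd p = x}"
  have fin: "finite (sg_supp g)" "finite (sg_supp q)"
    using assms by (simp_all add: salg_UNIV_iff)
  have "smult_alg (deg_part (e - c) g) q x = (\<Sum>p\<in>?P. deg_part (e - c) g (fst p) * q (snd p))"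
    by (rule smult_alg_eq_sum_superset) (use fin sg_supp_deg_part_subset in auto)
  also have "\<dots> = (\<Sum>p\<in>?P. if snd x = e then g (fst p) * q (snd p) else 0)"
    using q_hom by (intro sum.cong) (auto simp: deg_part_def)
  also have "\<dots> = deg_part e (smult_alg g q) x"
    by (cases "snd x = e") (simp_all add: deg_part_def smult_alg_def)
  finally show "deg_part e (smult_alg g q) x = smult_alg (deg_part (e - c) g) q x" ..
qed

lemma dehomog_eq_sum_superset:
  assumes "finite A" "sg_supp g \<subseteq> A"
  shows "dehomog g s = (\<Sum>p\<in>{p\<in>A. fst p = s}. g p)"
  unfolding dehomog_def
  by (rule sum.mono_neutral_left) (use assms in \<open>auto simp: sg_supp_def\<close>)

lemma sg_supp_dehomog_subset: "sg_supp (dehomog g) \<subseteq> fst ` sg_supp g"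
proof
  fix s assume "s \<in> sg_supp (dehomog g)"
  then have "dehomog g s \<noteq> 0" by (simp add: sg_supp_def)
  then have "{p \<in> sg_supp g. fst p = s} \<noteq> {}"
    unfolding dehomog_def by (metis sum.empty)
  then show "s \<in> fst ` sg_supp g" by force
qed

lemma dehomog_in_salg:
  assumes "g \<in> salg H" "fst ` H \<subseteq> S"
  shows "dehomog g \<in> salg S"
proof -
  have "sg_supp (dehomog g) \<subseteq> fst ` sg_supp g" by (rule sg_supp_dehomog_subset)
  moreover have "finite (fst ` sg_supp g)" "fst ` sg_supp g \<subseteq> S"
    using assms by (auto simp: salg_def)
  ultimately show ?thesis by (auto simp: salg_def intro: finite_subset)
qed

lemma dehomog_sum:
  assumes "finite A" "\<forall>i\<in>A. u i \<in> salg UNIV"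
  shows "dehomog (\<lambda>x. \<Sum>i\<in>A. u i x) = (\<lambda>s. \<Sum>i\<in>A. dehomog (u i) s)"
proof
  fix s
  let ?B = "\<Union>i\<in>A. sg_supp (u i)"
  have fin: "finite ?B" using assms by (auto simp: salg_UNIV_iff)
  have "dehomog (\<lambda>x. \<Sum>i\<in>A. u i x) s = (\<Sum>p\<in>{p\<in>?B. fst p = s}. \<Sum>i\<in>A. u i p)"
    by (rule dehomog_eq_sum_superset[OF fin])
      (auto simp: sg_supp_def elim!: sum.not_neutral_contains_not_neutral)
  also have "\<dots> = (\<Sum>i\<in>A. \<Sum>p\<in>{p\<in>?B. fst p = s}. u i p)"
    by (rule sum.swap)
  also have "\<dots> = (\<Sum>i\<in>A. dehomog (u i) s)"
    using fin by (intro sum.cong refl dehomog_eq_sum_superset[symmetric]) auto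
  finally show "dehomog (\<lambda>x. \<Sum>i\<in>A. u i x) s = (\<Sum>i\<in>A. dehomog (u i) s)" .
qed

lemma dehomog_deg_part: "dehomog (deg_part d g) s = g (s, d)"
proof -
  have "{p \<in> sg_supp (deg_part d g). fst p = s} = (if g (s, d) = 0 then {} else {(s, d)})"
    by (auto simp: sg_supp_def deg_part_def)
  then show ?thesis by (simp add: dehomog_def deg_part_def)
qed

lemma dehomog_concentrated: "dehomog (\<lambda>(s, e). if e = c then f s else 0) = f"
proof
  fix s
  have "{p \<in> sg_supp (\<lambda>(s, e). if e = c then f s else 0). fst p = s} = (if f s = 0 then {} else {(s, c)})"
    by (auto simp: sg_supp_def split: if_splits)
  then show "dehomog (\<lambda>(s, e). if e = c then f s else 0) s = f s" by (simp add: dehomog_def)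
qed

lemma dehomog_smult_alg_eq_sum:
  fixes f g :: "'a::monoid_add \<times> int \<Rightarrow> 'k::comm_ring_1"
  assumes "finite (sg_supp f)" "finite (sg_supp g)"
  shows "dehomog (smult_alg f g) s =
    (\<Sum>p\<in>{p \<in> sg_supp f \<times> sg_supp g. fst (fst p) + fst (snd p) = s}. f (fst p) * g (snd p))"
proof -
  let ?P = "sg_supp f \<times> sg_supp g" and ?add = "\<lambda>p. fst p + snd p"
  let ?w = "\<lambda>p. f (fst p) * g (snd p)"
  have fin: "finite ?P" using assms by simp
  have "sg_supp (smult_alg f g) \<subseteq> ?add ` ?P"
    using sg_supp_smult_alg[of f g] by force
  then have "dehomog (smult_alg f g) s = (\<Sum>c\<in>{c \<in> ?add ` ?P. fst c = s}. smult_alg f g c)"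
    using fin by (intro dehomog_eq_sum_superset) auto
  also have "\<dots> = (\<Sum>c\<in>{c \<in> ?add ` ?P. fst c = s}.
      sum ?w {p \<in> {p \<in> ?P. fst (?add p) = s}. ?add p = c})"
    by (intro sum.cong refl) (auto simp: smult_alg_def intro!: sum.cong)
  also have "\<dots> = sum ?w {p \<in> ?P. fst (?add p) = s}"
    using fin by (intro sum.group) auto
  finally show ?thesis by simp
qed

lemma smult_alg_dehomog_eq_sum:
  fixes f g :: "'a::monoid_add \<times> int \<Rightarrow> 'k::comm_ring_1"
  assumes "finite (sg_supp f)" "finite (sg_supp g)"
  shows "smult_alg (dehomog f) (dehomog g) s =
    (\<Sum>p\<in>{p \<in> sg_supp f \<times> sg_supp g. fst (fst p) + fst (snd p) = s}. f (fst p) * g (snd p))"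
proof -
  let ?S = "{p \<in> sg_supp f \<times> sg_supp g. fst (fst p) + fst (snd p) = s}"
  let ?Q = "{q \<in> fst ` sg_supp f \<times> fst ` sg_supp g. fst q + snd q = s}"
  let ?pr = "\<lambda>p. (fst (fst p), fst (snd p))" and ?w = "\<lambda>p. f (fst p) * g (snd p)"
  have "smult_alg (dehomog f) (dehomog g) s = (\<Sum>q\<in>?Q. dehomog f (fst q) * dehomog g (snd q))"
    using assms sg_supp_dehomog_subset[of f] sg_supp_dehomog_subset[of g]
    by (intro smult_alg_eq_sum_superset) auto
  also have "\<dots> = (\<Sum>q\<in>?Q. sum ?w {p \<in> ?S. ?pr p = q})"
  proof (rule sum.cong[OF refl])
    fix q assume q: "q \<in> ?Q"
    have "dehomog f (fst q) * dehomog g (snd q) =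
        (\<Sum>a\<in>{a \<in> sg_supp f. fst a = fst q}. \<Sum>b\<in>{b \<in> sg_supp g. fst b = snd q}. f a * g b)"
      by (simp add: dehomog_def sum_product)
    also have "\<dots> = sum ?w ({a \<in> sg_supp f. fst a = fst q} \<times> {b \<in> sg_supp g. fst b = snd q})"
      by (simp add: sum.cartesian_product case_prod_beta)
    also have "{a \<in> sg_supp f. fst a = fst q} \<times> {b \<in> sg_supp g. fst b = snd q} = {p \<in> ?S. ?pr p = q}"
      using q by auto
    finally show "dehomog f (fst q) * dehomog g (snd q) = sum ?w {p \<in> ?S. ?pr p = q}" .
  qed
  also have "\<dots> = sum ?w ?S"
    using assms by (intro sum.group) auto
  finally show ?thesis .
qed

lemma dehomog_smult_alg:
  fixes f g :: "'a::monoid_add \<times> int \<Rightarrow> 'k::comm_ring_1"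
  assumes "f \<in> salg UNIV" "g \<in> salg UNIV"
  shows "dehomog (smult_alg f g) = smult_alg (dehomog f) (dehomog g)"
  using assms by (simp add: salg_UNIV_iff fun_eq_iff dehomog_smult_alg_eq_sum smult_alg_dehomog_eq_sum)

lemma deg_part_mem_sg_ideal_gen:
  fixes G :: "('a::plus \<times> int \<Rightarrow> 'k::comm_ring_1) set"
  assumes "G \<subseteq> salg UNIV" and homogeneous: "\<forall>q\<in>G. \<exists>c. sg_supp q \<subseteq> {p. snd p = c}"
    and "a \<in> sg_ideal_gen S G"
  shows "deg_part e a \<in> sg_ideal_gen S G"
proof -
  obtain m h q where a: "a = (\<lambda>x. \<Sum>j<(m::nat). smult_alg (h j) (q j) x)"
    and hq: "\<forall>j<m. h j \<in> salg S \<and> q j \<in> G"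
    using assms(3) unfolding sg_ideal_gen_def by blast
  have "\<forall>j<m. \<exists>c. sg_supp (q j) \<subseteq> {p. snd p = c}"
    using homogeneous hq by blast
  then obtain c where c: "\<forall>j<m. sg_supp (q j) \<subseteq> {p. snd p = c j}"
    by metis
  have fin: "\<forall>j<m. h j \<in> salg UNIV \<and> q j \<in> salg UNIV"
    using hq assms(1) salg_subset_salg_UNIV by blast
  have "deg_part e (smult_alg (h j) (q j)) = smult_alg (deg_part (e - c j) (h j)) (q j)" if "j < m" for j
    using fin c that by (intro deg_part_smult_alg) auto
  then have "deg_part e a = (\<lambda>x. \<Sum>j<m. smult_alg (deg_part (e - c j) (h j)) (q j) x)"
    unfolding a deg_part_sum by simp
  also have "\<dots> \<in> sg_ideal_gen S G"
    using hq by (intro smult_alg_sum_mem_sg_ideal_gen) (auto intro: deg_part_in_salg)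
  finally show ?thesis .
qed

lemma dehomog_mem_sg_ideal_gen:
  fixes G :: "('a::monoid_add \<times> int \<Rightarrow> 'k::comm_ring_1) set"
  assumes "fst ` H \<subseteq> S" "G \<subseteq> salg UNIV" "a \<in> sg_ideal_gen H G"
  shows "dehomog a \<in> sg_ideal_gen S (dehomog ` G)"
proof -
  obtain m h q where a: "a = (\<lambda>x. \<Sum>j<(m::nat). smult_alg (h j) (q j) x)"
    and hq: "\<forall>j<m. h j \<in> salg H \<and> q j \<in> G"
    using assms(3) unfolding sg_ideal_gen_def by blast
  have fin: "\<forall>j<m. h j \<in> salg UNIV \<and> q j \<in> salg UNIV"
    using hq assms(2) salg_subset_salg_UNIV by blast
  have "dehomog a = (\<lambda>s. \<Sum>j<m. smult_alg (dehomog (h j)) (dehomog (q j)) s)"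
    unfolding a using fin by (simp add: dehomog_sum smult_alg_in_salg_UNIV dehomog_smult_alg)
  also have "\<dots> \<in> sg_ideal_gen S (dehomog ` G)"
    using hq assms(1) by (intro smult_alg_sum_mem_sg_ideal_gen) (auto intro: dehomog_in_salg)
  finally show ?thesis .
qed

section \<open>Homogenization over the semigroups of a polytope\<close>

lemma S_M_h_memD: "p \<in> S_M_h M \<Longrightarrow> fst p \<in> S_M M \<and> snd p \<ge> 0"
  unfolding S_M_h_def S_M_def
  by (induction rule: gen_monoid.induct) (auto intro: gen_monoid.intros)

lemma zero_in_lattice_points: "0 \<in> M \<Longrightarrow> 0 \<in> lattice_points M"
  by (simp add: lattice_points_def vec_eq_iff zero_vec_def)

lemma height_in_S_M_h:
  assumes "0 \<in> M"
  shows "(0, int k) \<in> S_M_h M"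
proof (induction k)
  case 0
  then show ?case by (simp add: S_M_h_def gen_monoid.zero flip: zero_prod_def)
next
  case (Suc k)
  have "(0, 1) \<in> S_M_h M"
    unfolding S_M_h_def using zero_in_lattice_points[OF assms] by (blast intro: gen_monoid.gen)
  with Suc have "(0, int k) + (0, 1) \<in> S_M_h M"
    unfolding S_M_h_def by (rule gen_monoid.add)
  then show ?case by (simp add: add.commute)
qed

lemma adeg_mon_le: "(s, int d) \<in> S_M_h M \<Longrightarrow> adeg_mon M s \<le> d"
  unfolding adeg_mon_def by (rule Least_le)

lemma sg_supp_homog: "sg_supp (homog M f) = (\<lambda>s. (s, int (adeg M f))) ` sg_supp f"
  by (auto simp: sg_supp_def homog_def split: if_splits)

lemma homog_in_salg_UNIV: "f \<in> salg UNIV \<Longrightarrow> homog M f \<in> salg UNIV"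
  by (simp add: salg_UNIV_iff sg_supp_homog)

lemma dehomog_homog: "dehomog (homog M f) = f"
  unfolding homog_def by (rule dehomog_concentrated)

lemma deg_part_mem_homog_ideal:
  "J \<subseteq> salg UNIV \<Longrightarrow> a \<in> homog_ideal M J \<Longrightarrow> deg_part e a \<in> homog_ideal M J"
  unfolding homog_ideal_def
  by (rule deg_part_mem_sg_ideal_gen) (auto simp: sg_supp_homog intro: homog_in_salg_UNIV)

lemma dehomog_mem_of_homog_ideal:
  assumes "G \<subseteq> salg UNIV" "a \<in> homog_ideal M (sg_ideal_gen (S_M M) G)"
  shows "dehomog a \<in> sg_ideal_gen (S_M M) G"
proof -
  let ?J = "sg_ideal_gen (S_M M) G"
  have J_fin: "?J \<subseteq> salg UNIV"
    using assms(1) by (rule sg_ideal_gen_subset_salg_UNIV)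
  have "dehomog a \<in> sg_ideal_gen (S_M M) (dehomog ` homog M ` ?J)"
    using assms(2) J_fin S_M_h_memD unfolding homog_ideal_def
    by (intro dehomog_mem_sg_ideal_gen) (auto intro: homog_in_salg_UNIV)
  also have "dehomog ` homog M ` ?J = ?J"
    by (simp add: image_image dehomog_homog)
  also have "sg_ideal_gen (S_M M) ?J \<subseteq> ?J"
    using assms(1) unfolding S_M_def by (intro sg_ideal_gen_idem gen_monoid.add)
  finally show ?thesis .
qed

lemma homogeneous_mem_homog_ideal:
  fixes g :: "(int ^ 'n) \<times> int \<Rightarrow> 'k::comm_ring_1"
  assumes "0 \<in> M" "g \<in> salg (S_M_h M)" and g_hom: "sg_supp g \<subseteq> {p. snd p = d}"
    and "dehomog g \<in> J"
  shows "g \<in> homog_ideal M J"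
proof (cases "sg_supp g = {}")
  case True
  then have "g = (\<lambda>x. 0)" by (auto simp: sg_supp_def)
  then show ?thesis by (simp add: homog_ideal_def zero_mem_sg_ideal_gen)
next
  case False
  define u where "u = dehomog g"
  have "deg_part d g = g"
    using g_hom by (auto simp: deg_part_def sg_supp_def fun_eq_iff)
  then have u: "u s = g (s, d)" for s
    unfolding u_def by (metis dehomog_deg_part)
  have g_S_M_h: "p \<in> S_M_h M" if "p \<in> sg_supp g" for p
    using assms(2) that by (auto simp: salg_def)
  obtain s0 where s0: "(s0, d) \<in> sg_supp g"
    using False g_hom by fastforce
  then have d_nonneg: "d \<ge> 0" using S_M_h_memD g_S_M_h by fastforce
  have "adeg_mon M s \<le> nat d" if "s \<in> sg_supp u" for s
    using that g_S_M_h d_nonneg by (intro adeg_mon_le) (simp add: u sg_supp_def)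
  moreover have "finite (sg_supp u)" "s0 \<in> sg_supp u"
    using dehomog_in_salg[OF assms(2), of UNIV] s0 by (auto simp: u_def[symmetric] salg_def u sg_supp_def)
  ultimately have "adeg M u \<le> nat d"
    unfolding adeg_def by (subst Max_le_iff) auto
  \<comment> \<open>g is the homogenization of its dehomogenization u, raised by the monomial X^(0,k).\<close>
  define k where "k = d - int (adeg M u)"
  define X where "X = (\<lambda>x :: (int ^ 'n) \<times> int. if x = (0, k) then (1::'k) else 0)"
  have "k \<ge> 0"
    using \<open>adeg M u \<le> nat d\<close> d_nonneg unfolding k_def by linarith
  then have "(0, k) \<in> S_M_h M"
    using height_in_S_M_h[OF assms(1), of "nat k"] by simp
  moreover have "sg_supp X = {(0, k)}" by (auto simp: X_def sg_supp_def)
  ultimately have X: "X \<in> salg (S_M_h M)"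
    by (simp add: salg_def)
  have "homog M u \<in> salg UNIV"
    using dehomog_in_salg[OF assms(2), of UNIV] by (simp add: u_def homog_in_salg_UNIV)
  then have "smult_alg X (homog M u) = (\<lambda>x. homog M u (x - (0, k)))"
    unfolding X_def by (rule smult_alg_single_left)
  also have "\<dots> = g"
  proof
    fix x :: "(int ^ 'n) \<times> int"
    show "homog M u (x - (0, k)) = g x"
      using g_hom by (cases x) (auto simp: homog_def u k_def sg_supp_def)
  qed
  finally have g_eq: "g = smult_alg X (homog M u)" ..
  have "smult_alg X (homog M u) \<in> homog_ideal M J"
    unfolding homog_ideal_def using X assms(4) by (intro smult_alg_mem_sg_ideal_gen) (simp_all add: u_def)
  then show ?thesis using g_eq by simp
qed

lemma nonzerodiv_mod_homog_ideal:
  fixes f :: "int ^ 'n \<Rightarrow> 'k::comm_ring_1"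
  assumes "0 \<in> M" "G \<subseteq> salg UNIV" "f \<in> salg UNIV"
    and f_nzd: "nonzerodiv_mod (S_M M) (sg_ideal_gen (S_M M) G) f"
  shows "nonzerodiv_mod (S_M_h M) (homog_ideal M (sg_ideal_gen (S_M M) G)) (homog M f)"
  unfolding nonzerodiv_mod_def
proof (intro ballI impI)
  let ?J = "sg_ideal_gen (S_M M) G" and ?F = "homog M f"
  fix g assume g: "g \<in> salg (S_M_h M)" and Fg: "smult_alg ?F g \<in> homog_ideal M ?J"
  have g_fin: "g \<in> salg UNIV" using g salg_subset_salg_UNIV by blast
  have F_fin: "?F \<in> salg UNIV" using assms(3) by (rule homog_in_salg_UNIV)
  have F_hom: "sg_supp ?F \<subseteq> {p. snd p = int (adeg M f)}" by (auto simp: sg_supp_homog)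
  have J_fin: "?J \<subseteq> salg UNIV" using assms(2) by (rule sg_ideal_gen_subset_salg_UNIV)
  have "deg_part d g \<in> homog_ideal M ?J" for d
  proof -
    let ?gd = "deg_part d g"
    have gd: "?gd \<in> salg (S_M_h M)" "?gd \<in> salg UNIV"
      using g g_fin by (simp_all add: deg_part_in_salg)
    have "deg_part (d + int (adeg M f)) (smult_alg g ?F) \<in> homog_ideal M ?J"
      using deg_part_mem_homog_ideal[OF J_fin Fg] smult_alg_commute[OF g_fin F_fin] by simp
    then have "smult_alg ?gd ?F \<in> homog_ideal M ?J"
      using deg_part_smult_alg[OF g_fin F_fin F_hom, of "d + int (adeg M f)"] by simp
    then have "dehomog (smult_alg ?gd ?F) \<in> ?J"
      by (rule dehomog_mem_of_homog_ideal[OF assms(2)])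
    also have "dehomog (smult_alg ?gd ?F) = smult_alg f (dehomog ?gd)"
      using dehomog_smult_alg[OF gd(2) F_fin] dehomog_in_salg[OF gd(2), of UNIV] assms(3)
      by (simp add: dehomog_homog smult_alg_commute)
    finally have "smult_alg f (dehomog ?gd) \<in> ?J" .
    moreover have "dehomog ?gd \<in> salg (S_M M)"
      using gd(1) S_M_h_memD by (intro dehomog_in_salg) auto
    ultimately have "dehomog ?gd \<in> ?J"
      using f_nzd unfolding nonzerodiv_mod_def by blast
    then show ?thesis
      by (rule homogeneous_mem_homog_ideal[OF assms(1) gd(1) sg_supp_deg_part_homogeneous])
  qed
  then have "(\<lambda>x. \<Sum>d\<in>snd ` sg_supp g. deg_part d g x) \<in> homog_ideal M ?J"
    using g_fin unfolding homog_ideal_def by (intro sum_mem_sg_ideal_gen) (auto simp: salg_UNIV_iff)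
  then show "g \<in> homog_ideal M ?J"
    using g_fin by (simp add: sum_deg_part)
qed

theorem mainTheorem11:
  fixes M :: "(real ^ 'n) set" and fs :: "(int ^ 'n \<Rightarrow> 'k::field_char_0) list"
  assumes "polytope M" and "0 \<in> M"
    and "pointed (S_M M)" and "pointed (S_M_h M)"
    and "regular_seq (S_M M) fs"
  shows "\<forall>i < length fs. nonzerodiv_mod (S_M_h M)
           (homog_ideal M (sg_ideal_gen (S_M M) (set (take i fs)))) (homog M (fs ! i))"
proof (intro allI impI)
  fix i assume i: "i < length fs"
  have "set fs \<subseteq> salg (S_M M)"
    using assms(5) by (simp add: regular_seq_def)
  then have fs: "set fs \<subseteq> salg UNIV"
    using salg_subset_salg_UNIV by blast
  show "nonzerodiv_mod (S_M_h M) (homog_ideal M (sg_ideal_gen (S_M M) (set (take i fs)))) (homog M (fs ! i))"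
  proof (rule nonzerodiv_mod_homog_ideal)
    show "0 \<in> M" by fact
    show "set (take i fs) \<subseteq> salg UNIV" using set_take_subset fs by (rule subset_trans)
    show "fs ! i \<in> salg UNIV" using fs nth_mem[OF i] by blast
    show "nonzerodiv_mod (S_M M) (sg_ideal_gen (S_M M) (set (take i fs))) (fs ! i)"
      using assms(5) i unfolding regular_seq_def by blast
  qed
qed

end
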